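(* Let $\mu$ be a probability measure on $\mathbb{R}^d$ and $\nu=\sum_{i=1}^M w_i\delta_{y_i}$ a discrete probability measure ($w_i>0$, $\sum_i w_i=1$), and let $c:\mathbb{R}^d\times\mathbb{R}^d\to[0,\infty)$ be a nonnegative cost. Suppose that the optimal transport problem between $\mu$ and $\nu$ with cost $c$ is well-posed, that strong duality holds, and that the semi-dual problem $\min_{\mathbf g\in\mathbb{R}^M} H(\mathbf g)$ admits a minimum. Let $K\subset\mathbb{R}^d$ be any compact set with $\mu(K)\ge 1-\frac12\min_j w_j$. Then there exists a minimizer $\mathbf g^*$ of $H$ contained in $$\mathcal C:=\{\mathbf g\in\mathbb{R}^M : |g_j|\le \|c\|_{K,\infty}\ \text{for all } j\},\qquad \|c\|_{K,\infty}:=\sup_{x\in K,\ j\in\{1,\dots,M\}}|c(x,y_j)|.$$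
   Context: For $\mathbf g=(g_1,\dots,g_M)\in\mathbb{R}^M$, the $c$-transform is $\mathbf g^c(x)=\min_{1\le i\le M}\{c(x,y_i)-g_i\}$, and the (convex) semi-dual objective is $H(\mathbf g)=\mathbb{E}_{X\sim\mu}[-\mathbf g^c(X)]-\sum_{j=1}^M w_jg_j$. Its minimum value equals minus the optimal transport cost $\min_{\pi\in\Pi(\mu,\nu)}\int c\,d\pi$ (up to the sign convention). Laguerre cells: $\mathbb L_j(\mathbf g)=\{x:\mathbf g^c(x)=c(x,y_j)-g_j\}$. *)

theory Defs
  imports "HOL-Probability.Probability"
begin

text \<open>Target points y 0, ..., y (M-1) (0-indexed), weights w, dual vector g :: nat => real
  (only the entries g 0, ..., g (M-1) matter).\<close>

definition ctrans :: "('a \<Rightarrow> 'a \<Rightarrow> real) \<Rightarrow> (nat \<Rightarrow> 'a) \<Rightarrow> nat \<Rightarrow> (nat \<Rightarrow> real) \<Rightarrow> 'a \<Rightarrow> real" where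
  "ctrans c y M g x = (MIN i\<in>{..<M}. c x (y i) - g i)"

definition semidual :: "'a measure \<Rightarrow> ('a \<Rightarrow> 'a \<Rightarrow> real) \<Rightarrow> (nat \<Rightarrow> 'a) \<Rightarrow> (nat \<Rightarrow> real) \<Rightarrow> nat
    \<Rightarrow> (nat \<Rightarrow> real) \<Rightarrow> real" where
  "semidual \<mu> c y w M g = (\<integral>x. - ctrans c y M g x \<partial>\<mu>) - (\<Sum>j<M. w j * g j)"

definition disc_measure :: "(nat \<Rightarrow> real) \<Rightarrow> (nat \<Rightarrow> 'a::topological_space) \<Rightarrow> nat \<Rightarrow> 'a measure" where
  "disc_measure w y M = measure_of UNIV (sets borel) (\<lambda>A. \<Sum>j<M. ennreal (w j) * indicator A (y j))"

definition couplings :: "'a::topological_space measure \<Rightarrow> 'a measure \<Rightarrow> ('a \<times> 'a) measure set" where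
  "couplings \<mu> \<nu> = {\<pi>. prob_space \<pi> \<and> sets \<pi> = sets (borel :: ('a \<times> 'a) measure)
      \<and> distr \<pi> borel fst = \<mu> \<and> distr \<pi> borel snd = \<nu>}"

definition ot_cost :: "'a::topological_space measure \<Rightarrow> 'a measure \<Rightarrow> ('a \<Rightarrow> 'a \<Rightarrow> real) \<Rightarrow> ennreal" where
  "ot_cost \<mu> \<nu> c = (INF \<pi>\<in>couplings \<mu> \<nu>. \<integral>\<^sup>+ p. ennreal (c (fst p) (snd p)) \<partial>\<pi>)"

end

theory Submission
  imports Defs
begin

text \<open>Let \<open>g\<close> minimize \<open>H\<close> and let \<open>k\<close> be an index where \<open>g\<close> is smallest. Raising a single
  entry \<open>g\<^sub>j\<close> by \<open>t\<close> lowers the linear part of \<open>H\<close> by \<open>w\<^sub>j t\<close> and raises the integral part by at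
  most \<open>t\<close> times the mass of a neighbourhood of the Laguerre cell \<open>\<LL>\<^sub>j(g)\<close>; minimality therefore
  forces \<open>\<mu>(\<LL>\<^sub>j(g)) \<ge> w\<^sub>j\<close>. Hence \<open>\<LL>\<^sub>k(g)\<close> meets \<open>K\<close> in some point \<open>x\<close>, and there
  \<open>c(x,y\<^sub>k) - g\<^sub>k \<le> c(x,y\<^sub>i) - g\<^sub>i\<close> together with \<open>c \<ge> 0\<close> gives \<open>0 \<le> g\<^sub>i - g\<^sub>k \<le> c(x,y\<^sub>i)\<close>.
  Since \<open>H\<close> is invariant under adding constants, \<open>g - g\<^sub>k\<close> is the required minimizer.\<close>

definition laguerre_cell :: "('a \<Rightarrow> 'a \<Rightarrow> real) \<Rightarrow> (nat \<Rightarrow> 'a) \<Rightarrow> nat \<Rightarrow> (nat \<Rightarrow> real) \<Rightarrow> nat \<Rightarrow> 'a set"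
  where "laguerre_cell c y M g j = {x. ctrans c y M g x = c x (y j) - g j}"

lemma ctrans_le:
  assumes "i < M"
  shows "ctrans c y M g x \<le> c x (y i) - g i"
  unfolding ctrans_def using assms by (intro Min_le) auto

lemma ctrans_attained:
  assumes "M \<ge> 1"
  obtains i where "i < M" "ctrans c y M g x = c x (y i) - g i"
proof -
  have "ctrans c y M g x \<in> (\<lambda>i. c x (y i) - g i) ` {..<M}"
    unfolding ctrans_def using assms by (intro Min_in) (auto simp: lessThan_empty_iff)
  then show ?thesis using that by auto
qed

lemma mem_laguerre_cell_iff:
  assumes "j < M"
  shows "x \<in> laguerre_cell c y M g j \<longleftrightarrow> c x (y j) - g j \<le> ctrans c y M g x"
  using ctrans_le[OF assms, of c y g x] unfolding laguerre_cell_def by auto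

lemma ctrans_add_const:
  assumes "M \<ge> 1"
  shows "ctrans c y M (\<lambda>i. g i + t) x = ctrans c y M g x - t"
proof -
  have "ctrans c y M (\<lambda>i. g i + t) x = (MIN i\<in>{..<M}. (c x (y i) - g i) + (- t))"
    unfolding ctrans_def by (simp add: algebra_simps)
  also have "\<dots> = ctrans c y M g x - t"
    unfolding ctrans_def using assms by (subst Min_add_commute) (auto simp: lessThan_empty_iff)
  finally show ?thesis .
qed

lemma ctrans_fun_upd_add:
  assumes "j < M" "t \<ge> 0"
  shows "ctrans c y M (g(j := g j + t)) x = min (ctrans c y M g x) (c x (y j) - g j - t)"
proof (rule antisym)
  have "M \<ge> 1"
    using assms(1) by simp
  then obtain i where i: "i < M" "ctrans c y M g x = c x (y i) - g i"
    by (rule ctrans_attained)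
  have "ctrans c y M (g(j := g j + t)) x \<le> c x (y i) - (g(j := g j + t)) i"
    by (rule ctrans_le[OF i(1)])
  also have "\<dots> \<le> ctrans c y M g x" using i assms(2) by auto
  finally show "ctrans c y M (g(j := g j + t)) x \<le> min (ctrans c y M g x) (c x (y j) - g j - t)"
    using ctrans_le[OF assms(1), of c y "g(j := g j + t)" x] by simp
next
  show "min (ctrans c y M g x) (c x (y j) - g j - t) \<le> ctrans c y M (g(j := g j + t)) x"
    unfolding ctrans_def using assms by (subst Min_ge_iff) (auto simp: min_le_iff_disj Min_le_iff)
qed

lemma measurable_cost_slice:
  fixes c :: "'a::topological_space \<Rightarrow> 'a \<Rightarrow> real"
  assumes "(\<lambda>p. c (fst p) (snd p)) \<in> borel_measurable borel"
  shows "(\<lambda>x. c x a) \<in> borel_measurable borel"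
proof -
  have "(\<lambda>x. (x, a)) \<in> borel_measurable (borel :: 'a measure)"
    by (intro borel_measurable_continuous_onI continuous_intros)
  from measurable_compose[OF this assms] show ?thesis by simp
qed

lemma borel_measurable_ctrans:
  assumes "\<And>a. (\<lambda>x. c x a) \<in> borel_measurable N"
  shows "ctrans c y M g \<in> borel_measurable N"
  unfolding ctrans_def by (intro borel_measurable_Min borel_measurable_diff assms) auto

lemma laguerre_cell_in_sets:
  assumes "space N = UNIV" "\<And>a. (\<lambda>x. c x a) \<in> borel_measurable N" "j < M"
  shows "laguerre_cell c y M g j \<in> sets N"
proof -
  have "(\<lambda>x. c x (y j) - g j) \<in> borel_measurable N"
    by (rule borel_measurable_diff[OF assms(2) borel_measurable_const])
  then have "{x \<in> space N. c x (y j) - g j \<le> ctrans c y M g x} \<in> sets N"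
    by (rule borel_measurable_le[OF _ borel_measurable_ctrans[OF assms(2)]])
  moreover have "laguerre_cell c y M g j = {x \<in> space N. c x (y j) - g j \<le> ctrans c y M g x}"
    by (auto simp: mem_laguerre_cell_iff[OF assms(3)] assms(1))
  ultimately show ?thesis by simp
qed

lemma semidual_add_const:
  assumes "prob_space \<mu>" "M \<ge> 1" "(\<Sum>j<M. w j) = 1"
    and "integrable \<mu> (ctrans c y M g)"
  shows "semidual \<mu> c y w M (\<lambda>i. g i + t) = semidual \<mu> c y w M g"
proof -
  interpret prob_space \<mu> by fact
  have "(\<integral>x. - ctrans c y M (\<lambda>i. g i + t) x \<partial>\<mu>) = (\<integral>x. - ctrans c y M g x + t \<partial>\<mu>)"
    by (simp add: ctrans_add_const[OF assms(2)])
  also have "\<dots> = (\<integral>x. - ctrans c y M g x \<partial>\<mu>) + t"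
    using assms(4) by (subst Bochner_Integration.integral_add) (auto simp: prob_space)
  moreover have "(\<Sum>j<M. w j * (g j + t)) = (\<Sum>j<M. w j * g j) + t"
    using assms(3) by (simp add: algebra_simps sum.distrib flip: sum_distrib_left)
  ultimately show ?thesis
    unfolding semidual_def by simp
qed

text \<open>A non-integrable \<open>g\<^sup>c\<close> has Bochner integral \<open>0\<close>, and so does \<open>(g + 1)\<^sup>c = g\<^sup>c - 1\<close>; then \<open>H(g + 1) = H(g) - 1\<close>.\<close>

lemma minimizer_integrable_ctrans:
  assumes "prob_space \<mu>" "M \<ge> 1" "(\<Sum>j<M. w j) = 1"
    and min: "\<forall>g'. semidual \<mu> c y w M g \<le> semidual \<mu> c y w M g'"
  shows "integrable \<mu> (ctrans c y M g)"
proof (rule ccontr)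
  interpret prob_space \<mu> by fact
  assume not_int: "\<not> integrable \<mu> (ctrans c y M g)"
  then have "\<not> integrable \<mu> (\<lambda>x. - ctrans c y M g x)"
    by simp
  moreover have "\<not> integrable \<mu> (\<lambda>x. - ctrans c y M (\<lambda>i. g i + 1) x)"
  proof
    assume "integrable \<mu> (\<lambda>x. - ctrans c y M (\<lambda>i. g i + 1) x)"
    then have "integrable \<mu> (\<lambda>x. - (- ctrans c y M (\<lambda>i. g i + 1) x) + 1)"
      by auto
    then show False
      using not_int by (simp add: ctrans_add_const[OF assms(2)])
  qed
  ultimately have "semidual \<mu> c y w M (\<lambda>i. g i + 1) = semidual \<mu> c y w M g - 1"
    unfolding semidual_def using assms(3)
    by (simp add: not_integrable_integral_eq algebra_simps sum.distrib)
  then show False using min by (metis diff_less_eq less_add_one linorder_not_less)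
qed

lemma weight_le_measure_near_laguerre_cell:
  assumes "prob_space \<mu>" "space \<mu> = UNIV" and slice: "\<And>a. (\<lambda>x. c x a) \<in> borel_measurable \<mu>"
    and "M \<ge> 1" "(\<Sum>j<M. w j) = 1"
    and min: "\<forall>g'. semidual \<mu> c y w M g \<le> semidual \<mu> c y w M g'"
    and j: "j < M" and t: "t > 0"
  shows "w j \<le> measure \<mu> {x. c x (y j) - g j < ctrans c y M g x + t}"
proof -
  interpret prob_space \<mu> by fact
  define f where "f = ctrans c y M g"
  define h where "h = (\<lambda>x. c x (y j) - g j)"
  define d where "d = (\<lambda>x. max 0 (f x - h x + t))"
  define A where "A = {x. h x < f x + t}"
  have f_meas: "f \<in> borel_measurable \<mu>"
    unfolding f_def by (rule borel_measurable_ctrans[OF slice])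
  have h_meas: "h \<in> borel_measurable \<mu>"
    unfolding h_def using slice by measurable
  have A_sets: "A \<in> sets \<mu>"
    using borel_measurable_less[OF h_meas borel_measurable_add[OF f_meas borel_measurable_const]]
    unfolding A_def assms(2) by simp
  have f_le_h: "f x \<le> h x" for x
    unfolding f_def h_def by (rule ctrans_le[OF j])
  have d_le: "d x \<le> t * indicator A x" for x
    using f_le_h[of x] t unfolding d_def A_def by (auto simp: indicator_def)
  have d_int: "integrable \<mu> d"
    by (rule Bochner_Integration.integrable_bound[where f="\<lambda>x. t"])
       (use f_meas h_meas f_le_h t in \<open>auto simp: d_def\<close>)
  have f_int: "integrable \<mu> f"
    unfolding f_def by (rule minimizer_integrable_ctrans[OF assms(1,4,5) min])
  define g' where "g' = g(j := g j + t)"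
  have "ctrans c y M g' x = f x - d x" for x
    unfolding g'_def f_def d_def h_def using ctrans_fun_upd_add[OF j, of t c y g x] t by auto
  then have integral_g': "(\<integral>x. - ctrans c y M g' x \<partial>\<mu>) = (\<integral>x. - f x \<partial>\<mu>) + (\<integral>x. d x \<partial>\<mu>)"
    using f_int d_int by simp
  have "(\<Sum>i<M. w i * g' i) = (\<Sum>i<M. w i * g i + (if i = j then w j * t else 0))"
    unfolding g'_def by (intro sum.cong) (auto simp: algebra_simps)
  then have sum_g': "(\<Sum>i<M. w i * g' i) = (\<Sum>i<M. w i * g i) + w j * t"
    using j by (simp add: sum.distrib)
  have "w j * t \<le> (\<integral>x. d x \<partial>\<mu>)"
    using min[rule_format, of g'] unfolding semidual_def integral_g' sum_g' f_def by simp
  also have "\<dots> \<le> (\<integral>x. t * indicator A x \<partial>\<mu>)"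
    using d_int A_sets d_le by (intro integral_mono) (auto simp: emeasure_eq_measure)
  also have "\<dots> = t * measure \<mu> A"
    using A_sets by simp
  finally show ?thesis
    using t unfolding A_def h_def f_def by (simp add: mult.commute)
qed

lemma weight_le_measure_laguerre_cell:
  assumes "prob_space \<mu>" "space \<mu> = UNIV" and slice: "\<And>a. (\<lambda>x. c x a) \<in> borel_measurable \<mu>"
    and "M \<ge> 1" "(\<Sum>j<M. w j) = 1"
    and min: "\<forall>g'. semidual \<mu> c y w M g \<le> semidual \<mu> c y w M g'"
    and j: "j < M"
  shows "w j \<le> measure \<mu> (laguerre_cell c y M g j)"
proof -
  interpret prob_space \<mu> by fact
  define f where "f = ctrans c y M g"
  define h where "h = (\<lambda>x. c x (y j) - g j)"
  define A where "A = (\<lambda>n::nat. {x. h x < f x + 1 / Suc n})"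
  have f_meas: "f \<in> borel_measurable \<mu>"
    unfolding f_def by (rule borel_measurable_ctrans[OF slice])
  have h_meas: "h \<in> borel_measurable \<mu>"
    unfolding h_def using slice by measurable
  have "A n \<in> sets \<mu>" for n
    using borel_measurable_less[OF h_meas borel_measurable_add[OF f_meas borel_measurable_const]]
    unfolding A_def assms(2) by simp
  then have A_sets: "range A \<subseteq> sets \<mu>"
    by blast
  have "decseq A"
    unfolding A_def by (intro decseq_SucI) (auto simp: frac_le intro: less_le_trans)
  moreover have "(\<Inter>n. A n) = laguerre_cell c y M g j"
  proof -
    have "h x < f x + 1 / Suc n" if "h x \<le> f x" for x n
    proof -
      have "0 < 1 / real (Suc n)"
        by simp
      then show ?thesis
        using that by linarith
    qed
    moreover have "\<exists>n. \<not> h x < f x + 1 / Suc n" if "\<not> h x \<le> f x" for x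
    proof -
      have "h x - f x > 0"
        using that by simp
      then obtain n where "inverse (Suc n) < h x - f x"
        using reals_Archimedean by blast
      then have "\<not> h x < f x + 1 / Suc n"
        by (simp add: inverse_eq_divide)
      then show ?thesis ..
    qed
    ultimately show ?thesis
      unfolding A_def h_def f_def mem_laguerre_cell_iff[OF j, symmetric] by blast
  qed
  ultimately have "(\<lambda>n. measure \<mu> (A n)) \<longlonglongrightarrow> measure \<mu> (laguerre_cell c y M g j)"
    using finite_Lim_measure_decseq[OF A_sets] by simp
  moreover have "w j \<le> measure \<mu> (A n)" for n
    unfolding A_def f_def h_def
    by (rule weight_le_measure_near_laguerre_cell[OF assms(1,2) slice assms(4,5) min j]) simp
  ultimately show ?thesis
    by (intro LIMSEQ_le_const) auto
qed

lemma (in prob_space) Int_nonempty_if_prob_sum_gt_1: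
  assumes "A \<in> events" "B \<in> events" "prob A + prob B > 1"
  shows "A \<inter> B \<noteq> {}"
proof
  assume "A \<inter> B = {}"
  then have "prob (A \<union> B) = prob A + prob B"
    using assms by (simp add: finite_measure_Union)
  then show False using assms prob_le_1[of "A \<union> B"] by simp
qed

lemma dual_diff_le_cost:
  assumes "x \<in> laguerre_cell c y M g k" "i < M" "c x (y k) \<ge> 0"
  shows "g i - g k \<le> c x (y i)"
  using assms ctrans_le[OF assms(2), of c y g x] unfolding laguerre_cell_def by simp

lemma minimizer_semidual_diff_const:
  assumes "prob_space \<mu>" "M \<ge> 1" "(\<Sum>j<M. w j) = 1"
    and min: "\<forall>g'. semidual \<mu> c y w M g \<le> semidual \<mu> c y w M g'"
  shows "\<forall>g'. semidual \<mu> c y w M (\<lambda>i. g i - s) \<le> semidual \<mu> c y w M g'"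
  using semidual_add_const[OF assms(1-3) minimizer_integrable_ctrans[OF assms], of "- s"] min
  by simp

lemma laguerre_cell_meets_heavy_set:
  assumes "prob_space \<mu>" "space \<mu> = UNIV" "\<And>a. (\<lambda>x. c x a) \<in> borel_measurable \<mu>"
    and "M \<ge> 1" "(\<Sum>j<M. w j) = 1"
    and "\<forall>g'. semidual \<mu> c y w M g \<le> semidual \<mu> c y w M g'"
    and "k < M" "K \<in> sets \<mu>" "measure \<mu> K > 1 - w k"
  obtains x where "x \<in> laguerre_cell c y M g k" "x \<in> K"
proof -
  interpret prob_space \<mu> by fact
  have "prob (laguerre_cell c y M g k) + prob K > 1"
    using weight_le_measure_laguerre_cell[OF assms(1-7)] assms(9) by simp
  then have "laguerre_cell c y M g k \<inter> K \<noteq> {}"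
    by (intro Int_nonempty_if_prob_sum_gt_1 laguerre_cell_in_sets[OF assms(2,3,7)] assms(8))
  then show ?thesis
    using that by blast
qed

theorem lemma3p1:
  fixes \<mu> :: "'a::euclidean_space measure"
    and c :: "'a \<Rightarrow> 'a \<Rightarrow> real"
    and y :: "nat \<Rightarrow> 'a" and w :: "nat \<Rightarrow> real" and M :: nat
    and K :: "'a set"
  assumes prob: "prob_space \<mu>" and sets_mu: "sets \<mu> = sets borel"
    and M_pos: "M \<ge> 1"
    and w_pos: "\<forall>j<M. w j > 0" and w_sum: "(\<Sum>j<M. w j) = 1"
    and c_nonneg: "\<forall>x z. c x z \<ge> 0"
    and c_meas: "(\<lambda>p. c (fst p) (snd p)) \<in> borel_measurable borel"
    and well_posed: "ot_cost \<mu> (disc_measure w y M) c < \<infinity>"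
      "\<exists>\<pi>\<in>couplings \<mu> (disc_measure w y M).
          (\<integral>\<^sup>+ p. ennreal (c (fst p) (snd p)) \<partial>\<pi>) = ot_cost \<mu> (disc_measure w y M) c"
    and strong_duality: "(INF g. ereal (semidual \<mu> c y w M g))
                           = - enn2ereal (ot_cost \<mu> (disc_measure w y M) c)"
    and has_min: "\<exists>g. \<forall>g'. semidual \<mu> c y w M g \<le> semidual \<mu> c y w M g'"
    and K_compact: "compact K"
    and K_mass: "measure \<mu> K \<ge> 1 - Min (w ` {..<M}) / 2"
  shows "\<exists>g. (\<forall>g'. semidual \<mu> c y w M g \<le> semidual \<mu> c y w M g')
            \<and> (\<forall>j<M. ereal \<bar>g j\<bar> \<le> (SUP p\<in>K \<times> {..<M}. ereal \<bar>c (fst p) (y (snd p))\<bar>))"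
proof -
  have space: "space \<mu> = UNIV" using sets_eq_imp_space_eq[OF sets_mu] by simp
  have slice: "(\<lambda>x. c x a) \<in> borel_measurable \<mu>" for a
    using measurable_cost_slice[OF c_meas] measurable_cong_sets[OF sets_mu refl] by blast
  obtain g where min: "\<forall>g'. semidual \<mu> c y w M g \<le> semidual \<mu> c y w M g'"
    using has_min by blast
  obtain k where k: "k < M" "\<forall>i<M. g k \<le> g i"
    using ex_min_if_finite[of "g ` {..<M}"] M_pos by (fastforce simp: lessThan_empty_iff not_less)
  have "Min (w ` {..<M}) \<le> w k" "w k > 0"
    using k(1) w_pos by (auto intro: Min_le)
  then have "measure \<mu> K > 1 - w k"
    using K_mass by linarith
  moreover have "K \<in> sets \<mu>"
    using sets_mu compact_imp_closed[OF K_compact] by simp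
  ultimately obtain x where x: "x \<in> laguerre_cell c y M g k" "x \<in> K"
    using laguerre_cell_meets_heavy_set[OF prob space slice M_pos w_sum min k(1)] by blast
  have "ereal \<bar>g j - g k\<bar> \<le> (SUP p\<in>K \<times> {..<M}. ereal \<bar>c (fst p) (y (snd p))\<bar>)" if j: "j < M" for j
  proof -
    have "ereal \<bar>g j - g k\<bar> \<le> ereal \<bar>c (fst (x, j)) (y (snd (x, j)))\<bar>"
      using dual_diff_le_cost[OF x(1) j] c_nonneg k(2) j by simp
    also have "\<dots> \<le> (SUP p\<in>K \<times> {..<M}. ereal \<bar>c (fst p) (y (snd p))\<bar>)"
      using x(2) j by (intro SUP_upper) auto
    finally show ?thesis .
  qed
  then show ?thesis
    using minimizer_semidual_diff_const[OF prob M_pos w_sum min] by blast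
qed

end
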